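(* Consider any random-access planner that, when interacting with a simulator of $M_\beta$, halts almost surely for every $\beta\in\mathcal{A}$, and let $\pi_\tau$ be its output policy. Then there exists $\beta\in\mathcal{A}$ such that $$\sum_{i=1}^{d-2}\mathbb{P}_\beta\Big(\mathrm{err}_i(\pi_\tau,\beta)\ge\tfrac12\Big)\ge\frac{d-2}{2}-\frac{d-2}{2}\sqrt{1-\exp\Big(-\frac{5\Delta^2H\,\mathbb{E}_\beta[\tau]}{(d-2)^2}\Big)}.$$
   Context: Fix $d\ge3$, $\gamma\in[7/12,1)$, $H=1/(1-\gamma)$, $\alpha\in(0,0.05\gamma H/(1+\gamma)^2]$, $\Delta=4(1+\gamma)^2\alpha/(\gamma H^2)$. Action set $\mathcal{A}=\{\pm1/\sqrt{d-2}\}^{d-2}$, states $\{s_0,s_1\}$, initial state $s_0$. For $\beta\in\mathcal{A}$, $M_\beta$ has deterministic rewards $r(s_0,\cdot)=1$, $r(s_1,\cdot)=0$, transitions $P_\beta(s_0|s_0,a)=\gamma+\Delta\beta^\top a$, $P_\beta(s_1|s_0,a)=1-\gamma-\Delta\beta^\top a$, $P_\beta(s_1|s_1,a)=1$. Random-access planner: at each step, given the full history of queries and answers, the (possibly randomized) planner either queries any state-action pair, receiving an independent sample of next state and reward from $M_\beta$, or halts outputting a stationary memoryless policy $\pi_\tau$; $\tau$ is the number of queries, $\mathbb{P}_\beta,\mathbb{E}_\beta$ the induced probability and expectation. For a policy $\pi$ and $i\in\{1,\dots,d-2\}$, $\mathrm{err}_i(\pi,\beta)=\sum_{a\in\mathcal{A}}\pi(a|s_0)\mathbb{I}\{\mathrm{sign}(a_i)\neq\mathrm{sign}(\beta_i)\}$.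 If $\mathbb{E}_\beta[\tau]=\infty$ the exponential is interpreted as $0$. *)

theory Defs
  imports "HOL-Probability.Probability"
begin

datatype mstate = S0 | S1

type_synonym action = "nat \<Rightarrow> real"

definition action_set :: "nat \<Rightarrow> action set" where
  "action_set d = {a. (\<forall>i\<in>{1..d-2}. a i = 1 / sqrt (real (d-2)) \<or> a i = - 1 / sqrt (real (d-2)))
                      \<and> (\<forall>i. i \<notin> {1..d-2} \<longrightarrow> a i = 0)}"

definition ip :: "nat \<Rightarrow> action \<Rightarrow> action \<Rightarrow> real" where
  "ip d b a = (\<Sum>i=1..d-2. b i * a i)"

type_synonym policy = "mstate \<Rightarrow> action pmf"

type_synonym query = "mstate \<times> action"
type_synonym answer = "mstate \<times> real"   (* next state, reward *)
type_synonym history = "(query \<times> answer) list"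

datatype decision = Query mstate action | Halt policy

type_synonym planner = "history \<Rightarrow> decision pmf"

datatype config = Running history | Done history policy

definition sim :: "nat \<Rightarrow> real \<Rightarrow> real \<Rightarrow> action \<Rightarrow> mstate \<Rightarrow> action \<Rightarrow> answer pmf" where
  "sim d \<gamma> \<Delta> \<beta> s a = (case s of
      S0 \<Rightarrow> map_pmf (\<lambda>b. (if b then S0 else S1, 1)) (bernoulli_pmf (\<gamma> + \<Delta> * ip d \<beta> a))
    | S1 \<Rightarrow> return_pmf (S1, 0))"

definition step :: "planner \<Rightarrow> nat \<Rightarrow> real \<Rightarrow> real \<Rightarrow> action \<Rightarrow> config \<Rightarrow> config pmf" where
  "step P d \<gamma> \<Delta> \<beta> c = (case c of
      Running h \<Rightarrow> P h \<bind> (\<lambda>dec. case dec of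
          Query s a \<Rightarrow> map_pmf (\<lambda>ans. Running (h @ [((s, a), ans)])) (sim d \<gamma> \<Delta> \<beta> s a)
        | Halt \<pi> \<Rightarrow> return_pmf (Done h \<pi>))
    | Done h \<pi> \<Rightarrow> return_pmf (Done h \<pi>))"

fun run :: "planner \<Rightarrow> nat \<Rightarrow> real \<Rightarrow> real \<Rightarrow> action \<Rightarrow> nat \<Rightarrow> config pmf" where
  "run P d \<gamma> \<Delta> \<beta> 0 = return_pmf (Running [])"
| "run P d \<gamma> \<Delta> \<beta> (Suc n) = run P d \<gamma> \<Delta> \<beta> n \<bind> step P d \<gamma> \<Delta> \<beta>"

fun hist :: "config \<Rightarrow> history" where
  "hist (Running h) = h"
| "hist (Done h \<pi>) = h"

definition wf_planner :: "nat \<Rightarrow> planner \<Rightarrow> bool" where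
  "wf_planner d P \<longleftrightarrow> (\<forall>h. \<forall>dec\<in>set_pmf (P h).
      (\<forall>s a. dec = Query s a \<longrightarrow> a \<in> action_set d) \<and>
      (\<forall>\<pi>. dec = Halt \<pi> \<longrightarrow> (\<forall>s. set_pmf (\<pi> s) \<subseteq> action_set d)))"

definition halts_as :: "planner \<Rightarrow> nat \<Rightarrow> real \<Rightarrow> real \<Rightarrow> action \<Rightarrow> bool" where
  "halts_as P d \<gamma> \<Delta> \<beta> \<longleftrightarrow>
     (\<lambda>n. measure_pmf.prob (run P d \<gamma> \<Delta> \<beta> n) {c. \<exists>h \<pi>. c = Done h \<pi>}) \<longlonglongrightarrow> 1"

text \<open>P_beta(the planner halts with history h and output policy pi satisfying E h pi).\<close>
definition halt_prob :: "planner \<Rightarrow> nat \<Rightarrow> real \<Rightarrow> real \<Rightarrow> action \<Rightarrow> (history \<Rightarrow> policy \<Rightarrow> bool) \<Rightarrow> real" where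
  "halt_prob P d \<gamma> \<Delta> \<beta> E =
     (SUP n. measure_pmf.prob (run P d \<gamma> \<Delta> \<beta> n) {c. \<exists>h \<pi>. c = Done h \<pi> \<and> E h \<pi>})"

text \<open>E_beta[tau]: sup over n of E[min(tau, n)] (the history length after n steps).\<close>
definition expected_queries :: "planner \<Rightarrow> nat \<Rightarrow> real \<Rightarrow> real \<Rightarrow> action \<Rightarrow> ennreal" where
  "expected_queries P d \<gamma> \<Delta> \<beta> =
     (SUP n. \<integral>\<^sup>+ c. ennreal (real (length (hist c))) \<partial>measure_pmf (run P d \<gamma> \<Delta> \<beta> n))"

definition err :: "nat \<Rightarrow> nat \<Rightarrow> policy \<Rightarrow> action \<Rightarrow> real" where
  "err d i \<pi> \<beta> = (\<Sum>a\<in>action_set d. pmf (\<pi> S0) a * (if sgn (a i) \<noteq> sgn (\<beta> i) then 1 else 0))"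

end

theory Submission
  imports Defs
begin

text \<open>Fix a coordinate \<open>i\<close> and let \<open>flip i \<beta>\<close> be \<open>\<beta>\<close> with the sign of \<open>\<beta> i\<close> reversed.
  Since \<open>err_i(\<pi>,\<beta>) + err_i(\<pi>, flip i \<beta>) = 1\<close>, every output policy is bad (error \<open>\<ge> 1/2\<close>) for
  one of the two instances. Under \<open>M\<^sub>\<beta>\<close> the log-likelihood ratio of a run against
  \<open>M\<^bsub>flip i \<beta>\<^esub>\<close> decreases in expectation by at most the Bernoulli KL divergence
  \<open>K = 5\<Delta>\<^sup>2H/(d-2)\<^sup>2\<close> per query, so the KL divergence of the two run laws is at most
  \<open>K E\<^sub>\<beta>[\<tau>]\<close>, and the Bretagnolle--Huber inequality gives
  \<open>P\<^sub>\<beta>(err_i \<ge> 1/2) + P\<^bsub>flip i \<beta>\<^esub>(err_i \<ge> 1/2) \<ge> 1 - \<surd>(1 - exp (-K E\<^sub>\<beta>[\<tau>]))\<close>.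
  Summing over all \<open>\<beta>\<close> (the maps \<open>flip i\<close> permute the action set) and over \<open>i\<close>, some \<open>\<beta>\<close>
  satisfies the bound on average over its coordinates.\<close>

section \<open>Elementary inequalities\<close>

lemma ln_ge_quadratic_of_ge_1:
  fixes x :: real assumes "1 \<le> x"
  shows "(x - 1) - (x - 1)^2 / 2 \<le> ln x"
proof -
  let ?f = "\<lambda>t::real. ln t - (t - 1) + (t - 1)^2 / 2"
  have "?f 1 \<le> ?f x"
  proof (rule DERIV_nonneg_imp_nondecreasing[OF assms])
    fix t :: real assume t: "1 \<le> t" "t \<le> x"
    have "DERIV ?f t :> (1/t - 1 + (t - 1))"
      using t by (auto intro!: derivative_eq_intros simp: field_simps)
    moreover have "1/t - 1 + (t - 1) = (t-1)^2 / t" using t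
      by (simp add: field_simps power2_eq_square)
    ultimately show "\<exists>y. DERIV ?f t :> y \<and> 0 \<le> y" using t by auto
  qed
  then show ?thesis by simp
qed

lemma ln_ge_quadratic_of_le_1:
  fixes x :: real assumes "0 < x" "x \<le> 1"
  shows "(x - 1) - (x - 1)^2 / (2 * x) \<le> ln x"
proof -
  let ?f = "\<lambda>t::real. ln t - t / 2 + 1 / (2 * t)"
  have "?f 1 \<le> ?f x"
  proof (rule DERIV_nonpos_imp_nonincreasing[OF assms(2)])
    fix t :: real assume t: "x \<le> t" "t \<le> 1"
    then have "t > 0" using assms by simp
    then have "DERIV ?f t :> - ((1 - t)^2 / (2 * t^2))"
      by (auto intro!: derivative_eq_intros simp: field_simps power2_eq_square)
    then show "\<exists>y. DERIV ?f t :> y \<and> y \<le> 0" by fastforce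
  qed
  moreover have "?f x = ln x - ((x - 1) - (x - 1)^2 / (2 * x))" using assms
    by (simp add: field_simps power2_eq_square)
  ultimately show ?thesis by simp
qed

lemma diff_minus_sq_le_mult_ln_div:
  fixes x y :: real assumes "0 < x" "0 < y"
  shows "(x - y) - (x - y)^2 / (2 * min x y) \<le> y * ln (x / y)"
proof (cases "x \<le> y")
  case True
  have "(x/y - 1) - (x/y - 1)^2 / (2 * (x/y)) \<le> ln (x/y)"
    using assms True by (intro ln_ge_quadratic_of_le_1) auto
  from mult_left_mono[OF this, of y] assms
  have "y * ((x/y - 1) - (x/y - 1)^2 / (2 * (x/y))) \<le> y * ln (x / y)" by simp
  moreover have "y * ((x/y - 1) - (x/y - 1)^2 / (2 * (x/y))) = (x - y) - (x - y)^2 / (2 * min x y)"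
    using assms True by (simp add: field_simps power2_eq_square min_def)
  ultimately show ?thesis by simp
next
  case False
  have "(x/y - 1) - (x/y - 1)^2 / 2 \<le> ln (x/y)"
    using assms False by (intro ln_ge_quadratic_of_ge_1) auto
  from mult_left_mono[OF this, of y] assms
  have "y * ((x/y - 1) - (x/y - 1)^2 / 2) \<le> y * ln (x / y)" by simp
  moreover have "y * ((x/y - 1) - (x/y - 1)^2 / 2) = (x - y) - (x - y)^2 / (2 * y)"
    using assms by (simp add: field_simps power2_eq_square)
  moreover have "(x - y)^2 / (2 * y) \<le> (x - y)^2 / (2 * min x y)"
    using assms False by (simp add: min_def)
  ultimately show ?thesis by simp
qed

lemma bernoulli_neg_kl_ge:
  fixes p q :: real assumes "0 < p" "p < 1" "0 < q" "q < 1"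
  shows "- ((q - p)^2 * (1 / (2 * min q p) + 1 / (2 * min (1 - q) (1 - p))))
    \<le> p * ln (q / p) + (1 - p) * ln ((1 - q) / (1 - p))"
proof -
  have "(q - p) - (q - p)^2 / (2 * min q p) \<le> p * ln (q / p)"
    using assms by (intro diff_minus_sq_le_mult_ln_div) auto
  moreover have "((1 - q) - (1 - p)) - ((1 - q) - (1 - p))^2 / (2 * min (1 - q) (1 - p))
      \<le> (1 - p) * ln ((1 - q) / (1 - p))"
    using assms by (intro diff_minus_sq_le_mult_ln_div) auto
  moreover have "((1 - q) - (1 - p))^2 = (q - p)^2" by (simp add: power2_eq_square algebra_simps)
  ultimately show ?thesis by (simp add: algebra_simps)
qed

lemma abs_ln_div_le_1:
  fixes u v :: real assumes "0 < v" "v \<le> 2 * u" "u \<le> 2 * v"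
  shows "\<bar>ln (u / v)\<bar> \<le> 1"
proof -
  have "u > 0" using assms by simp
  have "ln (u / v) \<le> u / v - 1" using \<open>u > 0\<close> assms by (intro ln_le_minus_one) simp
  also have "\<dots> \<le> 1" using assms by (simp add: field_simps)
  finally have "ln (u / v) \<le> 1" .
  moreover have "ln (v / u) \<le> v / u - 1" using \<open>u > 0\<close> assms by (intro ln_le_minus_one) simp
  moreover have "v / u - 1 \<le> 1" using assms \<open>u > 0\<close> by (simp add: field_simps)
  moreover have "ln (v / u) = - ln (u / v)" using \<open>u > 0\<close> assms by (simp add: ln_div)
  ultimately show ?thesis by linarith
qed

lemma ex_le_of_sum_le:
  fixes f g :: "'a \<Rightarrow> real"
  assumes "finite S" "S \<noteq> {}" "sum g S \<le> sum f S"
  shows "\<exists>x\<in>S. g x \<le> f x"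
proof (rule ccontr)
  assume "\<not> ?thesis"
  then have "sum f S < sum g S" using assms(1,2) by (intro sum_strict_mono) auto
  with assms(3) show False by simp
qed

text \<open>The hypothesis is the AM-GM bound \<open>\<rho> \<le> \<surd>(m (2 - m))\<close> in a form that avoids
  choosing the optimal \<open>t\<close>.\<close>
lemma one_minus_sqrt_le_of_amgm_bounds:
  fixes m \<rho> :: real
  assumes "0 \<le> \<rho>" "0 \<le> m" "m \<le> 1" and amgm: "\<And>t. t > 0 \<Longrightarrow> \<rho> \<le> (t * m + (2 - m) / t) / 2"
  shows "1 - sqrt (1 - \<rho>^2) \<le> m"
proof -
  consider "m = 0" | "m = 1" | "0 < m" "m < 1" using assms by linarith
  then show ?thesis
  proof cases
    case 1
    have "\<not> 0 < \<rho>"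
    proof
      assume "0 < \<rho>"
      then have "\<rho> \<le> \<rho> / 4" using amgm[of "4/\<rho>"] 1 by (simp add: field_simps)
      with \<open>0 < \<rho>\<close> show False by linarith
    qed
    then show ?thesis using 1 \<open>0 \<le> \<rho>\<close> by simp
  next
    case 2
    have "\<rho> \<le> 1" using amgm[of 1] 2 by simp
    then have "\<rho>^2 \<le> 1" using \<open>0 \<le> \<rho>\<close> by (auto intro!: power_le_one)
    then show ?thesis using 2 by simp
  next
    case 3
    define t where "t = sqrt ((2 - m) / m)"
    have "t > 0" and tt: "t * t = (2 - m) / m" unfolding t_def using 3 by simp_all
    have "(t * m)^2 = (t * t) * (m * m)" by (simp add: power2_eq_square)
    also have "\<dots> = m * (2 - m)" unfolding tt using 3 by (simp add: field_simps)
    finally have "(t * m)^2 = m * (2 - m)" .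
    then have tm: "t * m = sqrt (m * (2 - m))"
      using \<open>t > 0\<close> 3 by (intro real_sqrt_unique[symmetric]) auto
    have "(2 - m) / t = t * m" using \<open>t > 0\<close> tt 3 by (simp add: field_simps)
    then have "\<rho> \<le> sqrt (m * (2 - m))" using amgm[OF \<open>t > 0\<close>] tm by simp
    then have "\<rho>^2 \<le> (sqrt (m * (2 - m)))^2" using \<open>0 \<le> \<rho>\<close> by (intro power_mono) auto
    then have "\<rho>^2 \<le> m * (2 - m)" using 3 by simp
    then have "(1 - m)^2 \<le> 1 - \<rho>^2" by (simp add: power2_eq_square algebra_simps)
    then have "sqrt ((1 - m)^2) \<le> sqrt (1 - \<rho>^2)" by (rule real_sqrt_le_mono)
    then show ?thesis using 3 by simp
  qed
qed

section \<open>Expectations under discrete distributions\<close>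

lemma integrable_pmf_bounded:
  fixes f :: "'a \<Rightarrow> real"
  assumes "\<And>x. x \<in> set_pmf M \<Longrightarrow> \<bar>f x\<bar> \<le> B"
  shows "integrable (measure_pmf M) f"
  by (rule measure_pmf.integrable_const_bound[where B=B]) (auto simp: AE_measure_pmf_iff assms)

lemma abs_expectation_pmf_le:
  fixes f :: "'a \<Rightarrow> real"
  assumes "\<And>x. x \<in> set_pmf M \<Longrightarrow> \<bar>f x\<bar> \<le> B"
  shows "\<bar>measure_pmf.expectation M f\<bar> \<le> B"
proof -
  have "integrable (measure_pmf M) f" by (rule integrable_pmf_bounded[OF assms])
  moreover have "- B \<le> f x \<and> f x \<le> B" if "x \<in> set_pmf M" for x
    using assms[OF that] by (auto simp: abs_le_iff)
  ultimately have "measure_pmf.expectation M f \<le> B" "- B \<le> measure_pmf.expectation M f"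
    by (auto intro!: measure_pmf.integral_le_const measure_pmf.integral_ge_const
        simp: AE_measure_pmf_iff)
  then show ?thesis by auto
qed

lemma expectation_bind_pmf_bounded:
  fixes f :: "'b \<Rightarrow> real"
  assumes B: "\<And>y. y \<in> set_pmf (bind_pmf M N) \<Longrightarrow> \<bar>f y\<bar> \<le> B"
  shows "measure_pmf.expectation (bind_pmf M N) f =
         measure_pmf.expectation M (\<lambda>x. measure_pmf.expectation (N x) f)"
proof -
  \<comment> \<open>truncating \<open>f\<close> outside the support makes it globally bounded, as \<open>integral_bind\<close> requires\<close>
  define g where "g y = max (- B) (min B (f y))" for y
  have gb: "\<bar>g y\<bar> \<le> \<bar>B\<bar>" for y unfolding g_def by auto
  have fg: "f y = g y" if "y \<in> set_pmf (bind_pmf M N)" for y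
    using B[OF that] unfolding g_def by auto
  have fg': "f y = g y" if "x \<in> set_pmf M" "y \<in> set_pmf (N x)" for x y
    using that by (intro fg) (auto simp: set_bind_pmf)
  have "measure_pmf.expectation (bind_pmf M N) f = measure_pmf.expectation (bind_pmf M N) g"
    by (intro integral_cong_AE) (auto simp: AE_measure_pmf_iff fg)
  also have "\<dots> = measure_pmf.expectation M (\<lambda>x. measure_pmf.expectation (N x) g)"
    unfolding measure_pmf_bind
    by (rule integral_bind[where K="count_space UNIV" and B="\<bar>B\<bar>" and B'=1])
       (auto intro: gb measurable_measure_pmf[of N, simplified]
         simp: space_subprob_algebra subprob_space_measure_pmf measure_pmf.emeasure_space_1)
  also have "\<dots> = measure_pmf.expectation M (\<lambda>x. measure_pmf.expectation (N x) f)"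
    by (intro integral_cong_AE) (auto simp: AE_measure_pmf_iff intro!: integral_cong_AE fg'[symmetric])
  finally show ?thesis .
qed

text \<open>Le Cam's inequality: the overlap \<open>E\<^sub>\<mu>[min 1 X]\<close> of \<open>\<mu>\<close> and \<open>\<nu> = X \<mu>\<close> is bounded below by
  their Bhattacharyya coefficient \<open>E\<^sub>\<mu>[\<surd>X]\<close>. The proof averages the pointwise AM-GM bound
  \<open>\<surd>X = \<surd>(t min 1 X \<cdot> max 1 X / t) \<le> (t min 1 X + max 1 X / t)/2\<close> and uses
  \<open>E\<^sub>\<mu>[max 1 X] = 2 - E\<^sub>\<mu>[min 1 X]\<close>.\<close>
lemma overlap_ge_bhattacharyya_pmf:
  fixes \<mu> :: "'a pmf" and X :: "'a \<Rightarrow> real"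
  assumes pos: "\<And>x. x \<in> set_pmf \<mu> \<Longrightarrow> 0 < X x"
    and bdd: "\<And>x. x \<in> set_pmf \<mu> \<Longrightarrow> X x \<le> C"
    and mean: "measure_pmf.expectation \<mu> X = 1"
  shows "1 - sqrt (1 - (measure_pmf.expectation \<mu> (\<lambda>x. sqrt (X x)))^2)
    \<le> measure_pmf.expectation \<mu> (\<lambda>x. min 1 (X x))"
proof -
  have intX: "integrable \<mu> X"
    by (rule integrable_pmf_bounded[where B=C]) (use pos bdd in force)
  have intmin: "integrable \<mu> (\<lambda>x. min 1 (X x))"
    by (rule integrable_pmf_bounded[where B=1]) (use pos in force)
  have intmax: "integrable \<mu> (\<lambda>x. max 1 (X x))"
    by (rule integrable_pmf_bounded[where B="1 + C"]) (use pos bdd in force)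
  have "\<bar>sqrt (X x)\<bar> \<le> (1 + C) / 2" if "x \<in> set_pmf \<mu>" for x
    using arith_geo_mean_sqrt[of 1 "X x"] pos[OF that] bdd[OF that] by simp
  then have intsq: "integrable \<mu> (\<lambda>x. sqrt (X x))" by (rule integrable_pmf_bounded)
  define m where "m = measure_pmf.expectation \<mu> (\<lambda>x. min 1 (X x))"
  define \<rho> where "\<rho> = measure_pmf.expectation \<mu> (\<lambda>x. sqrt (X x))"
  have "0 \<le> m" "m \<le> 1" "0 \<le> \<rho>" unfolding m_def \<rho>_def using pos
    by (auto intro!: measure_pmf.integral_ge_const measure_pmf.integral_le_const intmin intsq
        simp: AE_measure_pmf_iff less_imp_le)
  have Emax: "measure_pmf.expectation \<mu> (\<lambda>x. max 1 (X x)) = 2 - m"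
  proof -
    have "measure_pmf.expectation \<mu> (\<lambda>x. max 1 (X x))
        = measure_pmf.expectation \<mu> (\<lambda>x. (1 + X x) - min 1 (X x))"
      by (intro Bochner_Integration.integral_cong) (auto simp: max_def min_def)
    also have "\<dots> = 2 - m" unfolding m_def using intX intmin mean by simp
    finally show ?thesis .
  qed
  have "\<rho> \<le> (t * m + (2 - m) / t) / 2" if "t > 0" for t
  proof -
    have "sqrt (X x) \<le> (t * min 1 (X x) + max 1 (X x) / t) / 2" if "x \<in> set_pmf \<mu>" for x
    proof -
      have "sqrt (X x) = sqrt ((t * min 1 (X x)) * (max 1 (X x) / t))"
        using \<open>t > 0\<close> by (simp add: min_def max_def)
      also have "\<dots> \<le> (t * min 1 (X x) + max 1 (X x) / t) / 2"
        using pos[OF that] \<open>t > 0\<close> by (intro arith_geo_mean_sqrt) auto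
      finally show ?thesis .
    qed
    then have "\<rho> \<le> measure_pmf.expectation \<mu> (\<lambda>x. (t * min 1 (X x) + max 1 (X x) / t) / 2)"
      unfolding \<rho>_def using intsq intmin intmax
      by (intro integral_mono_AE) (auto simp: AE_measure_pmf_iff)
    also have "\<dots> = (t * m + measure_pmf.expectation \<mu> (\<lambda>x. max 1 (X x)) / t) / 2"
      unfolding m_def using intmin intmax by simp
    also have "\<dots> = (t * m + (2 - m) / t) / 2" unfolding Emax ..
    finally show ?thesis .
  qed
  from one_minus_sqrt_le_of_amgm_bounds[OF \<open>0 \<le> \<rho>\<close> \<open>0 \<le> m\<close> \<open>m \<le> 1\<close> this] show ?thesis
    unfolding m_def \<rho>_def .
qed

text \<open>Bretagnolle--Huber inequality for \<open>\<nu> = X \<mu>\<close>, where \<open>E\<^sub>\<mu>[ln X] = - KL(\<mu>,\<nu>)\<close>: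
  by Jensen, \<open>exp (E\<^sub>\<mu>[ln X]) \<le> E\<^sub>\<mu>[\<surd>X]\<^sup>2\<close>.\<close>
lemma bretagnolle_huber_pmf:
  fixes \<mu> :: "'a pmf" and X :: "'a \<Rightarrow> real"
  assumes pos: "\<And>x. x \<in> set_pmf \<mu> \<Longrightarrow> 0 < X x"
    and bdd: "\<And>x. x \<in> set_pmf \<mu> \<Longrightarrow> \<bar>ln (X x)\<bar> \<le> B"
    and mean: "measure_pmf.expectation \<mu> X = 1"
  shows "1 - sqrt (1 - exp (measure_pmf.expectation \<mu> (\<lambda>x. ln (X x))))
    \<le> measure_pmf.expectation \<mu> (\<lambda>x. min 1 (X x))"
proof -
  have sqrt_eq: "sqrt (X x) = exp (ln (X x) / 2)" if "x \<in> set_pmf \<mu>" for x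
    using pos[OF that] by (intro real_sqrt_unique) (auto simp: power2_eq_square exp_add[symmetric])
  have "X x \<le> exp B" if "x \<in> set_pmf \<mu>" for x
    using exp_le_cancel_iff[THEN iffD2, OF abs_le_D1[OF bdd[OF that]]] pos[OF that] by simp
  have "integrable \<mu> (\<lambda>x. ln (X x))" by (rule integrable_pmf_bounded[OF bdd])
  then have intL: "integrable \<mu> (\<lambda>x. ln (X x) / 2)" by simp
  have intsq: "integrable \<mu> (\<lambda>x. exp (ln (X x) / 2))"
    by (rule integrable_pmf_bounded[where B="exp B"]) (use bdd in force)
  have "exp (measure_pmf.expectation \<mu> (\<lambda>x. ln (X x) / 2))
      \<le> measure_pmf.expectation \<mu> (\<lambda>x. exp (ln (X x) / 2))"
    by (rule measure_pmf.jensens_inequality[where I=UNIV and q=exp, OF intL _ _ intsq exp_convex])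
      auto
  also have "\<dots> = measure_pmf.expectation \<mu> (\<lambda>x. sqrt (X x))"
    by (intro integral_cong_AE) (auto simp: AE_measure_pmf_iff sqrt_eq)
  finally have jensen: "exp (measure_pmf.expectation \<mu> (\<lambda>x. ln (X x) / 2))
      \<le> measure_pmf.expectation \<mu> (\<lambda>x. sqrt (X x))" .
  have "exp (measure_pmf.expectation \<mu> (\<lambda>x. ln (X x)))
      = (exp (measure_pmf.expectation \<mu> (\<lambda>x. ln (X x) / 2)))^2"
    by (simp add: power2_eq_square exp_add[symmetric])
  also have "\<dots> \<le> (measure_pmf.expectation \<mu> (\<lambda>x. sqrt (X x)))^2"
    using jensen by (intro power_mono) auto
  finally have "sqrt (1 - (measure_pmf.expectation \<mu> (\<lambda>x. sqrt (X x)))^2)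
      \<le> sqrt (1 - exp (measure_pmf.expectation \<mu> (\<lambda>x. ln (X x))))"
    by (intro real_sqrt_le_mono) simp
  with overlap_ge_bhattacharyya_pmf[OF pos \<open>\<And>x. x \<in> set_pmf \<mu> \<Longrightarrow> X x \<le> exp B\<close> mean]
  show ?thesis by linarith
qed

section \<open>The family of instances\<close>

definition flip :: "nat \<Rightarrow> action \<Rightarrow> action" where
  "flip i \<beta> = \<beta>(i := - \<beta> i)"

lemma flip_flip [simp]: "flip i (flip i \<beta>) = \<beta>"
  unfolding flip_def by auto

lemma inj_flip: "inj (flip i)"
  by (metis flip_flip injI)

locale mdp_family_planner =
  fixes d :: nat and \<gamma> \<Delta> H :: real and P :: planner
  assumes d_ge_3: "d \<ge> 3" and gamma_ge: "7/12 \<le> \<gamma>" and gamma_lt_1: "\<gamma> < 1"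
    and H_eq: "H = 1 / (1 - \<gamma>)"
    and Delta_nonneg: "0 \<le> \<Delta>" and Delta_le: "\<Delta> \<le> (1 - \<gamma>) / 5"
    and wf: "wf_planner d P"
begin

abbreviation \<A> :: "action set" where "\<A> \<equiv> action_set d"

abbreviation entry :: real where "entry \<equiv> 1 / sqrt (real (d - 2))"

lemma dim_ge_1: "1 \<le> real (d - 2)"
  using d_ge_3 by simp

lemma mem_action_set_iff:
  "a \<in> \<A> \<longleftrightarrow> (\<forall>j\<in>{1..d-2}. a j = entry \<or> a j = - entry) \<and> (\<forall>j. j \<notin> {1..d-2} \<longrightarrow> a j = 0)"
  unfolding action_set_def by auto

lemma finite_action_set: "finite \<A>"
proof (rule finite_subset)
  show "\<A> \<subseteq> {a. \<forall>j. (j \<in> {1..d-2} \<longrightarrow> a j \<in> {entry, - entry}) \<and> (j \<notin> {1..d-2} \<longrightarrow> a j = 0)}"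
    by (blast dest: mem_action_set_iff[THEN iffD1])
  show "finite {a. \<forall>j. (j \<in> {1..d-2} \<longrightarrow> a j \<in> {entry, - entry}) \<and> (j \<notin> {1..d-2} \<longrightarrow> a j = (0::real))}"
    by (rule finite_set_of_finite_funs) auto
qed

lemma action_set_nonempty: "\<A> \<noteq> {}"
proof -
  have "(\<lambda>j. if j \<in> {1..d-2} then entry else 0) \<in> \<A>" unfolding mem_action_set_iff by auto
  then show ?thesis by blast
qed

lemma abs_entry_product:
  assumes "\<beta> \<in> \<A>" "a \<in> \<A>" "j \<in> {1..d-2}"
  shows "\<bar>\<beta> j * a j\<bar> = 1 / real (d - 2)"
proof -
  have "\<beta> j = entry \<or> \<beta> j = - entry" "a j = entry \<or> a j = - entry"
    using assms by (auto simp: mem_action_set_iff)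
  then have "\<bar>\<beta> j * a j\<bar> = entry * entry" by (auto simp: abs_mult)
  then show ?thesis using dim_ge_1 by simp
qed

lemma abs_ip_le_1:
  assumes "\<beta> \<in> \<A>" "a \<in> \<A>"
  shows "\<bar>ip d \<beta> a\<bar> \<le> 1"
proof -
  have "\<bar>ip d \<beta> a\<bar> \<le> (\<Sum>j=1..d-2. \<bar>\<beta> j * a j\<bar>)" unfolding ip_def by (rule sum_abs)
  also have "\<dots> = (\<Sum>j=1..d-2. 1 / real (d - 2))"
    using assms by (intro sum.cong) (auto simp: abs_entry_product)
  also have "\<dots> = 1" using dim_ge_1 by simp
  finally show ?thesis .
qed

lemma flip_in_action_set: "\<beta> \<in> \<A> \<Longrightarrow> i \<in> {1..d-2} \<Longrightarrow> flip i \<beta> \<in> \<A>"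
  unfolding mem_action_set_iff flip_def by auto

lemma flip_image_action_set: "i \<in> {1..d-2} \<Longrightarrow> flip i ` \<A> = \<A>"
  using flip_in_action_set by (auto intro: image_eqI[where x="flip i _"])

lemma ip_flip:
  assumes "i \<in> {1..d-2}"
  shows "ip d (flip i \<beta>) a = ip d \<beta> a - 2 * (\<beta> i * a i)"
proof -
  have "ip d (flip i \<beta>) a - ip d \<beta> a = (\<Sum>j=1..d-2. if j = i then - 2 * (\<beta> i * a i) else 0)"
    unfolding ip_def flip_def sum_subtractf[symmetric] by (intro sum.cong) auto
  then show ?thesis using assms by simp
qed

lemma err_add_err_flip:
  assumes "\<beta> \<in> \<A>" "i \<in> {1..d-2}" "set_pmf (\<pi> S0) \<subseteq> \<A>"
  shows "err d i \<pi> \<beta> + err d i \<pi> (flip i \<beta>) = 1"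
proof -
  have sgn: "sgn (a i) = 1 \<or> sgn (a i) = -1" if "a \<in> \<A>" for a
  proof -
    have "a i = entry \<or> a i = - entry" using that assms(2) mem_action_set_iff by blast
    then show ?thesis using dim_ge_1 by auto
  qed
  have "sgn (flip i \<beta> i) = - sgn (\<beta> i)" unfolding flip_def by (simp add: sgn_minus)
  then have "err d i \<pi> \<beta> + err d i \<pi> (flip i \<beta>) = (\<Sum>a\<in>\<A>. pmf (\<pi> S0) a)"
    unfolding err_def sum.distrib[symmetric]
    by (intro sum.cong refl) (use sgn[OF assms(1)] sgn in fastforce)
  also have "\<dots> = 1" using assms(3) finite_action_set by (rule sum_pmf_eq_1[rotated])
  finally show ?thesis .
qed

definition stay_prob :: "action \<Rightarrow> action \<Rightarrow> real" where
  "stay_prob \<beta> a = \<gamma> + \<Delta> * ip d \<beta> a"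

lemma stay_prob_bounds:
  assumes "\<beta> \<in> \<A>" "a \<in> \<A>"
  shows "1/2 \<le> stay_prob \<beta> a" "4 * (1 - \<gamma>) / 5 \<le> 1 - stay_prob \<beta> a"
    "1 - stay_prob \<beta> a \<le> 6 * (1 - \<gamma>) / 5"
proof -
  have "\<bar>\<Delta> * ip d \<beta> a\<bar> \<le> \<Delta>"
    using abs_ip_le_1[OF assms] Delta_nonneg by (simp add: abs_mult mult_left_le)
  then show "1/2 \<le> stay_prob \<beta> a" "4 * (1 - \<gamma>) / 5 \<le> 1 - stay_prob \<beta> a"
      "1 - stay_prob \<beta> a \<le> 6 * (1 - \<gamma>) / 5"
    unfolding stay_prob_def using Delta_le gamma_ge gamma_lt_1 by auto
qed

definition kl_rate :: real where
  "kl_rate = 5 * \<Delta>^2 * H / (real (d - 2))^2"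

lemma H_pos: "0 < H"
  using gamma_lt_1 H_eq by simp

lemma H_ge: "12/5 \<le> H"
  using gamma_ge gamma_lt_1 unfolding H_eq by (simp add: field_simps)

lemma kl_rate_nonneg: "0 \<le> kl_rate"
  unfolding kl_rate_def using H_pos by simp

text \<open>Flipping coordinate \<open>i\<close> moves the stay probability by \<open>2\<Delta>/(d-2)\<close>, and both laws
  stay at distance \<open>\<ge> 4(1-\<gamma>)/5\<close> from \<open>1\<close>; hence each query costs at most \<open>kl_rate\<close>.\<close>
lemma neg_kl_stay_prob_ge:
  assumes \<beta>: "\<beta> \<in> \<A>" and i: "i \<in> {1..d-2}" and a: "a \<in> \<A>"
  defines "p \<equiv> stay_prob \<beta> a" and "q \<equiv> stay_prob (flip i \<beta>) a"
  shows "- kl_rate \<le> p * ln (q / p) + (1 - p) * ln ((1 - q) / (1 - p))"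
proof -
  note bp = stay_prob_bounds[OF \<beta> a, folded p_def]
  note bq = stay_prob_bounds[OF flip_in_action_set[OF \<beta> i] a, folded q_def]
  have "1 - \<gamma> > 0" using gamma_lt_1 by simp
  have D2: "(q - p)^2 = 4 * \<Delta>^2 / (real (d - 2))^2"
  proof -
    have "q - p = - 2 * \<Delta> * (\<beta> i * a i)"
      unfolding p_def q_def stay_prob_def ip_flip[OF i] by (simp add: algebra_simps)
    then have "(q - p)^2 = 4 * \<Delta>^2 * \<bar>\<beta> i * a i\<bar>^2" by (simp add: power2_eq_square)
    then show ?thesis using abs_entry_product[OF \<beta> a i] by (simp add: power_divide)
  qed
  have "1 / (2 * min q p) \<le> 1" using bp bq by simp
  moreover have "1 / (2 * min (1 - q) (1 - p)) \<le> 5 * H / 8"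
  proof -
    have "1 / (2 * min (1 - q) (1 - p)) \<le> 1 / (2 * (4 * (1 - \<gamma>) / 5))"
      using bp(2) bq(2) \<open>1 - \<gamma> > 0\<close> by (intro divide_left_mono) (auto simp: min_def)
    also have "\<dots> = 5 * H / 8" unfolding H_eq by simp
    finally show ?thesis .
  qed
  ultimately have "(q - p)^2 * (1 / (2 * min q p) + 1 / (2 * min (1 - q) (1 - p)))
      \<le> (q - p)^2 * (1 + 5 * H / 8)"
    by (intro mult_left_mono) auto
  also have "\<dots> = \<Delta>^2 / (real (d - 2))^2 * (4 + 5 * H / 2)"
    unfolding D2 using dim_ge_1 by (simp add: field_simps)
  also have "\<dots> \<le> \<Delta>^2 / (real (d - 2))^2 * (5 * H)"
    using H_ge by (intro mult_left_mono) auto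
  also have "\<dots> = kl_rate" unfolding kl_rate_def by simp
  finally show ?thesis
    using bernoulli_neg_kl_ge[of p q] bp bq \<open>1 - \<gamma> > 0\<close> by fastforce
qed

section \<open>Runs of the planner\<close>

lemma set_pmf_step:
  assumes "c \<in> set_pmf (step P d \<gamma> \<Delta> \<beta> c0)"
  shows "length (hist c) \<le> Suc (length (hist c0))"
    and "c = Done h \<pi> \<Longrightarrow> c0 = Done h \<pi> \<or> (c0 = Running h \<and> Halt \<pi> \<in> set_pmf (P h))"
proof -
  have "length (hist c) \<le> Suc (length (hist c0)) \<and>
     (c = Done h \<pi> \<longrightarrow> c0 = Done h \<pi> \<or> (c0 = Running h \<and> Halt \<pi> \<in> set_pmf (P h)))"
  proof (cases c0)
    case (Running h0)
    with assms obtain dec where "dec \<in> set_pmf (P h0)"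
      and "c \<in> set_pmf (case dec of
             Query s a \<Rightarrow> map_pmf (\<lambda>ans. Running (h0 @ [((s, a), ans)])) (sim d \<gamma> \<Delta> \<beta> s a)
           | Halt \<pi> \<Rightarrow> return_pmf (Done h0 \<pi>))"
      by (auto simp: step_def set_bind_pmf)
    with Running show ?thesis by (cases dec) auto
  qed (use assms in \<open>auto simp: step_def\<close>)
  then show "length (hist c) \<le> Suc (length (hist c0))"
    and "c = Done h \<pi> \<Longrightarrow> c0 = Done h \<pi> \<or> (c0 = Running h \<and> Halt \<pi> \<in> set_pmf (P h))"
    by auto
qed

lemma set_pmf_run_Suc:
  "c \<in> set_pmf (run P d \<gamma> \<Delta> \<beta> (Suc n)) \<longleftrightarrow>
   (\<exists>c0\<in>set_pmf (run P d \<gamma> \<Delta> \<beta> n). c \<in> set_pmf (step P d \<gamma> \<Delta> \<beta> c0))"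
  by (auto simp: set_bind_pmf)

lemma length_hist_run_le: "c \<in> set_pmf (run P d \<gamma> \<Delta> \<beta> n) \<Longrightarrow> length (hist c) \<le> n"
proof (induction n arbitrary: c)
  case (Suc n)
  then obtain c0 where "c0 \<in> set_pmf (run P d \<gamma> \<Delta> \<beta> n)" "c \<in> set_pmf (step P d \<gamma> \<Delta> \<beta> c0)"
    by (auto simp: set_pmf_run_Suc)
  with Suc.IH show ?case using set_pmf_step(1) by fastforce
qed simp

lemma output_policy_in_action_set:
  "c \<in> set_pmf (run P d \<gamma> \<Delta> \<beta> n) \<Longrightarrow> c = Done h \<pi> \<Longrightarrow> set_pmf (\<pi> S0) \<subseteq> \<A>"
proof (induction n arbitrary: c)
  case (Suc n)
  then obtain c0 where c0: "c0 \<in> set_pmf (run P d \<gamma> \<Delta> \<beta> n)" "c \<in> set_pmf (step P d \<gamma> \<Delta> \<beta> c0)"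
    by (auto simp: set_pmf_run_Suc)
  from set_pmf_step(2)[OF c0(2) Suc.prems(2)] show ?case
    using Suc.IH[OF c0(1)] wf unfolding wf_planner_def by blast
qed simp

lemma query_in_action_set: "Query s a \<in> set_pmf (P h) \<Longrightarrow> a \<in> \<A>"
  using wf unfolding wf_planner_def by blast

lemma expectation_step_Done: "measure_pmf.expectation (step P d \<gamma> \<Delta> \<beta> (Done h \<pi>)) f = f (Done h \<pi>)"
  for f :: "config \<Rightarrow> real"
  by (simp add: step_def)

lemma expectation_step_Running:
  fixes f :: "config \<Rightarrow> real"
  assumes "\<And>c. length (hist c) \<le> Suc (length h) \<Longrightarrow> \<bar>f c\<bar> \<le> B"
  shows "measure_pmf.expectation (step P d \<gamma> \<Delta> \<beta> (Running h)) f =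
    measure_pmf.expectation (P h) (\<lambda>dec. case dec of
        Query s a \<Rightarrow> measure_pmf.expectation (sim d \<gamma> \<Delta> \<beta> s a) (\<lambda>ans. f (Running (h @ [((s, a), ans)])))
      | Halt \<pi> \<Rightarrow> f (Done h \<pi>))"
proof -
  have "\<bar>f c\<bar> \<le> B" if "c \<in> set_pmf (step P d \<gamma> \<Delta> \<beta> (Running h))" for c
    using set_pmf_step(1)[OF that] by (intro assms) simp
  then have "measure_pmf.expectation (step P d \<gamma> \<Delta> \<beta> (Running h)) f =
     measure_pmf.expectation (P h) (\<lambda>dec. measure_pmf.expectation (case dec of
          Query s a \<Rightarrow> map_pmf (\<lambda>ans. Running (h @ [((s, a), ans)])) (sim d \<gamma> \<Delta> \<beta> s a)
        | Halt \<pi> \<Rightarrow> return_pmf (Done h \<pi>)) f)"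
    unfolding step_def config.case by (intro expectation_bind_pmf_bounded) (simp add: step_def)
  also have "\<dots> = measure_pmf.expectation (P h) (\<lambda>dec. case dec of
        Query s a \<Rightarrow> measure_pmf.expectation (sim d \<gamma> \<Delta> \<beta> s a) (\<lambda>ans. f (Running (h @ [((s, a), ans)])))
      | Halt \<pi> \<Rightarrow> f (Done h \<pi>))"
    by (intro Bochner_Integration.integral_cong refl) (auto split: decision.split simp: integral_map_pmf)
  finally show ?thesis .
qed

lemma expectation_run_Suc:
  fixes f :: "config \<Rightarrow> real"
  assumes "\<And>c. length (hist c) \<le> Suc n \<Longrightarrow> \<bar>f c\<bar> \<le> B"
  shows "measure_pmf.expectation (run P d \<gamma> \<Delta> \<beta> (Suc n)) f =
    measure_pmf.expectation (run P d \<gamma> \<Delta> \<beta> n) (\<lambda>c. measure_pmf.expectation (step P d \<gamma> \<Delta> \<beta> c) f)"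
  unfolding run.simps
proof (rule expectation_bind_pmf_bounded)
  fix c assume "c \<in> set_pmf (run P d \<gamma> \<Delta> \<beta> n \<bind> step P d \<gamma> \<Delta> \<beta>)"
  then show "\<bar>f c\<bar> \<le> B" using assms length_hist_run_le[of c _ "Suc n"] by simp
qed

lemma expectation_sim_S0:
  assumes "\<beta> \<in> \<A>" "a \<in> \<A>"
  shows "measure_pmf.expectation (sim d \<gamma> \<Delta> \<beta> S0 a) f
    = stay_prob \<beta> a * f (S0, 1) + (1 - stay_prob \<beta> a) * f (S1, 1)"
proof -
  have "measure_pmf.expectation (sim d \<gamma> \<Delta> \<beta> S0 a) f =
      measure_pmf.expectation (bernoulli_pmf (stay_prob \<beta> a)) (\<lambda>b. f (if b then S0 else S1, 1))"
    by (simp add: sim_def stay_prob_def integral_map_pmf)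
  also have "\<dots> = stay_prob \<beta> a * f (S0, 1) + (1 - stay_prob \<beta> a) * f (S1, 1)"
    using stay_prob_bounds[OF assms] gamma_lt_1 by (subst integral_bernoulli_pmf) auto
  finally show ?thesis .
qed

lemma expectation_sim_S1: "measure_pmf.expectation (sim d \<gamma> \<Delta> \<beta> S1 a) f = f (S1, 0)"
  for f :: "answer \<Rightarrow> real"
  by (simp add: sim_def)

section \<open>Likelihood ratios\<close>

text \<open>Answers from \<open>S1\<close> and answers to actions outside \<open>\<A>\<close> (never queried by a
  well-formed planner) get ratio \<open>1\<close>.\<close>
definition lik_ratio :: "action \<Rightarrow> action \<Rightarrow> query \<Rightarrow> answer \<Rightarrow> real" where
  "lik_ratio \<beta> \<beta>' q ans = (case q of (s, a) \<Rightarrow>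
      if s = S0 \<and> a \<in> \<A> then
        (if fst ans = S0 then stay_prob \<beta>' a / stay_prob \<beta> a
         else (1 - stay_prob \<beta>' a) / (1 - stay_prob \<beta> a))
      else 1)"

definition log_lik_ratio :: "action \<Rightarrow> action \<Rightarrow> history \<Rightarrow> real" where
  "log_lik_ratio \<beta> \<beta>' h = sum_list (map (\<lambda>(q, ans). ln (lik_ratio \<beta> \<beta>' q ans)) h)"

lemma log_lik_ratio_Nil [simp]: "log_lik_ratio \<beta> \<beta>' [] = 0"
  unfolding log_lik_ratio_def by simp

lemma log_lik_ratio_snoc:
  "log_lik_ratio \<beta> \<beta>' (h @ [(q, ans)]) = log_lik_ratio \<beta> \<beta>' h + ln (lik_ratio \<beta> \<beta>' q ans)"
  unfolding log_lik_ratio_def by simp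

lemma lik_ratio_pos_and_abs_ln_le_1:
  assumes "\<beta> \<in> \<A>" "\<beta>' \<in> \<A>"
  shows "0 < lik_ratio \<beta> \<beta>' q ans \<and> \<bar>ln (lik_ratio \<beta> \<beta>' q ans)\<bar> \<le> 1"
proof (cases "fst q = S0 \<and> snd q \<in> \<A>")
  case True
  note b = stay_prob_bounds[OF assms(1) conjunct2[OF True]] stay_prob_bounds[OF assms(2) conjunct2[OF True]]
  have "1 - \<gamma> > 0" using gamma_lt_1 by simp
  with True b show ?thesis
    by (cases q) (auto simp: lik_ratio_def intro!: divide_pos_pos abs_ln_div_le_1)
qed (auto simp: lik_ratio_def split: prod.split)

lemma abs_log_lik_ratio_le:
  assumes "\<beta> \<in> \<A>" "\<beta>' \<in> \<A>"
  shows "\<bar>log_lik_ratio \<beta> \<beta>' h\<bar> \<le> length h"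
proof (induction h rule: rev_induct)
  case (snoc x h)
  then show ?case
    using lik_ratio_pos_and_abs_ln_le_1[OF assms, of "fst x" "snd x"]
    by (simp add: log_lik_ratio_snoc[of _ _ _ "fst x" "snd x", simplified] abs_le_iff)
qed simp

lemma abs_log_lik_ratio_run_le:
  assumes "\<beta> \<in> \<A>" "\<beta>' \<in> \<A>" "c \<in> set_pmf (run P d \<gamma> \<Delta> \<beta>'' n)"
  shows "\<bar>log_lik_ratio \<beta> \<beta>' (hist c)\<bar> \<le> n"
  using abs_log_lik_ratio_le[OF assms(1,2), of "hist c"] length_hist_run_le[OF assms(3)] by linarith

lemma exp_log_lik_ratio_snoc:
  assumes "\<beta> \<in> \<A>" "\<beta>' \<in> \<A>"
  shows "exp (log_lik_ratio \<beta> \<beta>' (h @ [(q, ans)]))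
    = exp (log_lik_ratio \<beta> \<beta>' h) * lik_ratio \<beta> \<beta>' q ans"
  using lik_ratio_pos_and_abs_ln_le_1[OF assms] by (simp add: log_lik_ratio_snoc exp_add)

lemma abs_exp_log_lik_ratio_mult_le:
  assumes "\<beta> \<in> \<A>" "\<beta>' \<in> \<A>" "length h \<le> n" "\<bar>g\<bar> \<le> B"
  shows "\<bar>exp (log_lik_ratio \<beta> \<beta>' h) * g\<bar> \<le> exp n * B"
proof -
  have "log_lik_ratio \<beta> \<beta>' h \<le> n" using abs_log_lik_ratio_le[OF assms(1,2), of h] assms(3) by linarith
  then show ?thesis using assms(4) by (simp add: abs_mult mult_mono)
qed

lemma expectation_sim_change_of_measure:
  fixes f :: "answer \<Rightarrow> real"
  assumes \<beta>: "\<beta> \<in> \<A>" and \<beta>': "\<beta>' \<in> \<A>" and a: "a \<in> \<A>"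
  shows "measure_pmf.expectation (sim d \<gamma> \<Delta> \<beta> s a) (\<lambda>ans. lik_ratio \<beta> \<beta>' (s, a) ans * f ans)
    = measure_pmf.expectation (sim d \<gamma> \<Delta> \<beta>' s a) f"
proof (cases s)
  case S0
  have "0 < stay_prob \<beta> a" "0 < 1 - stay_prob \<beta> a"
    using stay_prob_bounds[OF \<beta> a] gamma_lt_1 by auto
  with a show ?thesis unfolding S0
    by (simp add: expectation_sim_S0[OF \<beta> a] expectation_sim_S0[OF \<beta>' a] lik_ratio_def field_simps)
qed (simp add: expectation_sim_S1 lik_ratio_def)

lemma expectation_step_change_of_measure:
  fixes g :: "config \<Rightarrow> real"
  assumes \<beta>: "\<beta> \<in> \<A>" and \<beta>': "\<beta>' \<in> \<A>" and len: "length (hist c0) \<le> n"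
    and gB: "\<And>c. \<bar>g c\<bar> \<le> B"
  shows "measure_pmf.expectation (step P d \<gamma> \<Delta> \<beta> c0) (\<lambda>c. exp (log_lik_ratio \<beta> \<beta>' (hist c)) * g c)
    = exp (log_lik_ratio \<beta> \<beta>' (hist c0)) * measure_pmf.expectation (step P d \<gamma> \<Delta> \<beta>' c0) g"
proof (cases c0)
  case (Running h)
  let ?X = "\<lambda>h. exp (log_lik_ratio \<beta> \<beta>' h)"
  have "\<bar>?X (hist c) * g c\<bar> \<le> exp (Suc n) * B" if "length (hist c) \<le> Suc (length h)" for c
    using that len Running by (intro abs_exp_log_lik_ratio_mult_le[OF \<beta> \<beta>' _ gB]) auto
  then have "measure_pmf.expectation (step P d \<gamma> \<Delta> \<beta> c0) (\<lambda>c. ?X (hist c) * g c) =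
    measure_pmf.expectation (P h) (\<lambda>dec. case dec of
        Query s a \<Rightarrow> measure_pmf.expectation (sim d \<gamma> \<Delta> \<beta> s a)
          (\<lambda>ans. ?X (h @ [((s, a), ans)]) * g (Running (h @ [((s, a), ans)])))
      | Halt \<pi> \<Rightarrow> ?X h * g (Done h \<pi>))"
    unfolding Running by (subst expectation_step_Running) simp_all
  also have "\<dots> = measure_pmf.expectation (P h) (\<lambda>dec. ?X h * (case dec of
        Query s a \<Rightarrow> measure_pmf.expectation (sim d \<gamma> \<Delta> \<beta>' s a) (\<lambda>ans. g (Running (h @ [((s, a), ans)])))
      | Halt \<pi> \<Rightarrow> g (Done h \<pi>)))"
    using query_in_action_set
    by (intro integral_cong_AE)
      (auto simp: AE_measure_pmf_iff exp_log_lik_ratio_snoc[OF \<beta> \<beta>'] mult.assoc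
        expectation_sim_change_of_measure[OF \<beta> \<beta>', symmetric] split: decision.split)
  also have "\<dots> = ?X (hist c0) * measure_pmf.expectation (step P d \<gamma> \<Delta> \<beta>' c0) g"
    unfolding Running by (simp add: expectation_step_Running[OF gB])
  finally show ?thesis .
qed (simp add: expectation_step_Done)

text \<open>The likelihood ratio \<open>exp (log_lik_ratio \<beta> \<beta>' (hist c))\<close> is the density of the law of
  the run under \<open>\<beta>'\<close> with respect to its law under \<open>\<beta>\<close>.\<close>
lemma expectation_run_change_of_measure:
  fixes g :: "config \<Rightarrow> real"
  assumes \<beta>: "\<beta> \<in> \<A>" and \<beta>': "\<beta>' \<in> \<A>" and gB: "\<And>c. \<bar>g c\<bar> \<le> B"
  shows "measure_pmf.expectation (run P d \<gamma> \<Delta> \<beta> n) (\<lambda>c. exp (log_lik_ratio \<beta> \<beta>' (hist c)) * g c)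
       = measure_pmf.expectation (run P d \<gamma> \<Delta> \<beta>' n) g"
  using gB
proof (induction n arbitrary: g B)
  case (Suc n)
  define G where "G c0 = measure_pmf.expectation (step P d \<gamma> \<Delta> \<beta>' c0) g" for c0
  have GB: "\<bar>G c\<bar> \<le> B" for c unfolding G_def by (rule abs_expectation_pmf_le) (rule Suc.prems)
  have "\<bar>exp (log_lik_ratio \<beta> \<beta>' (hist c)) * g c\<bar> \<le> exp (Suc n) * B"
    if "length (hist c) \<le> Suc n" for c
    using that by (intro abs_exp_log_lik_ratio_mult_le[OF \<beta> \<beta>' _ Suc.prems])
  then have "measure_pmf.expectation (run P d \<gamma> \<Delta> \<beta> (Suc n)) (\<lambda>c. exp (log_lik_ratio \<beta> \<beta>' (hist c)) * g c)
      = measure_pmf.expectation (run P d \<gamma> \<Delta> \<beta> n) (\<lambda>c0. measure_pmf.expectation (step P d \<gamma> \<Delta> \<beta> c0)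
          (\<lambda>c. exp (log_lik_ratio \<beta> \<beta>' (hist c)) * g c))"
    by (rule expectation_run_Suc)
  also have "\<dots> = measure_pmf.expectation (run P d \<gamma> \<Delta> \<beta> n) (\<lambda>c0. exp (log_lik_ratio \<beta> \<beta>' (hist c0)) * G c0)"
    unfolding G_def using length_hist_run_le
    by (intro integral_cong_AE)
      (auto simp: AE_measure_pmf_iff intro!: expectation_step_change_of_measure[OF \<beta> \<beta>' _ Suc.prems])
  also have "\<dots> = measure_pmf.expectation (run P d \<gamma> \<Delta> \<beta>' n) G"
    by (rule Suc.IH[OF GB])
  also have "\<dots> = measure_pmf.expectation (run P d \<gamma> \<Delta> \<beta>' (Suc n)) g"
    unfolding G_def by (rule expectation_run_Suc[symmetric, OF Suc.prems])
  finally show ?case .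
qed simp

definition compensated_llr :: "action \<Rightarrow> action \<Rightarrow> config \<Rightarrow> real" where
  "compensated_llr \<beta> \<beta>' c = log_lik_ratio \<beta> \<beta>' (hist c) + kl_rate * length (hist c)"

lemma abs_compensated_llr_le:
  assumes "\<beta> \<in> \<A>" "\<beta>' \<in> \<A>" "length (hist c) \<le> n"
  shows "\<bar>compensated_llr \<beta> \<beta>' c\<bar> \<le> (1 + kl_rate) * n"
proof -
  have "\<bar>compensated_llr \<beta> \<beta>' c\<bar> \<le> \<bar>log_lik_ratio \<beta> \<beta>' (hist c)\<bar> + kl_rate * length (hist c)"
    unfolding compensated_llr_def
    using abs_triangle_ineq[of "log_lik_ratio \<beta> \<beta>' (hist c)" "kl_rate * length (hist c)"] kl_rate_nonneg
    by simp
  also have "\<dots> \<le> n + kl_rate * n"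
    using abs_log_lik_ratio_le[OF assms(1,2), of "hist c"] assms(3) kl_rate_nonneg
    by (intro add_mono mult_left_mono) auto
  finally show ?thesis by (simp add: algebra_simps)
qed

text \<open>Under \<open>\<beta>\<close>, one query changes the log-likelihood ratio against \<open>flip i \<beta>\<close> by minus a
  Bernoulli KL divergence in expectation, which \<open>kl_rate\<close> compensates.\<close>
lemma compensated_llr_le_expectation_sim:
  assumes \<beta>: "\<beta> \<in> \<A>" and i: "i \<in> {1..d-2}" and a: "a \<in> \<A>"
  shows "compensated_llr \<beta> (flip i \<beta>) (Running h)
    \<le> measure_pmf.expectation (sim d \<gamma> \<Delta> \<beta> s a)
        (\<lambda>ans. compensated_llr \<beta> (flip i \<beta>) (Running (h @ [((s, a), ans)])))"
proof (cases s)
  case S0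
  let ?p = "stay_prob \<beta> a" and ?q = "stay_prob (flip i \<beta>) a"
  have "measure_pmf.expectation (sim d \<gamma> \<Delta> \<beta> s a)
        (\<lambda>ans. compensated_llr \<beta> (flip i \<beta>) (Running (h @ [((s, a), ans)])))
      = compensated_llr \<beta> (flip i \<beta>) (Running h) + kl_rate
        + (?p * ln (?q / ?p) + (1 - ?p) * ln ((1 - ?q) / (1 - ?p)))"
    unfolding S0 expectation_sim_S0[OF \<beta> a]
    using a by (simp add: compensated_llr_def log_lik_ratio_snoc lik_ratio_def algebra_simps)
  then show ?thesis using neg_kl_stay_prob_ge[OF \<beta> i a] by simp
qed (use kl_rate_nonneg in \<open>simp add: expectation_sim_S1 compensated_llr_def log_lik_ratio_snoc
    lik_ratio_def algebra_simps\<close>)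

lemma compensated_llr_le_expectation_step:
  assumes \<beta>: "\<beta> \<in> \<A>" and i: "i \<in> {1..d-2}" and len: "length (hist c0) \<le> n"
  shows "compensated_llr \<beta> (flip i \<beta>) c0
    \<le> measure_pmf.expectation (step P d \<gamma> \<Delta> \<beta> c0) (compensated_llr \<beta> (flip i \<beta>))"
proof (cases c0)
  case (Running h)
  let ?F = "compensated_llr \<beta> (flip i \<beta>)"
  have b1: "\<bar>?F c\<bar> \<le> (1 + kl_rate) * Suc n" if "length (hist c) \<le> Suc (length h)" for c
    using abs_compensated_llr_le[OF \<beta> flip_in_action_set[OF \<beta> i], of c "Suc n"] that len Running
    by simp
  define next_val where "next_val dec = (case dec of
        Query s a \<Rightarrow> measure_pmf.expectation (sim d \<gamma> \<Delta> \<beta> s a) (\<lambda>ans. ?F (Running (h @ [((s, a), ans)])))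
      | Halt \<pi> \<Rightarrow> ?F (Done h \<pi>))" for dec
  have "\<bar>next_val dec\<bar> \<le> (1 + kl_rate) * Suc n" for dec
    unfolding next_val_def by (cases dec) (auto intro!: abs_expectation_pmf_le b1[simplified])
  then have "integrable (measure_pmf (P h)) next_val" by (rule integrable_pmf_bounded)
  moreover have "?F c0 \<le> next_val dec" if "dec \<in> set_pmf (P h)" for dec
    using that compensated_llr_le_expectation_sim[OF \<beta> i query_in_action_set] unfolding Running
    by (cases dec) (auto simp: next_val_def compensated_llr_def)
  ultimately have "?F c0 \<le> measure_pmf.expectation (P h) next_val"
    by (intro measure_pmf.integral_ge_const) (simp_all add: AE_measure_pmf_iff)
  also have "\<dots> = measure_pmf.expectation (step P d \<gamma> \<Delta> \<beta> c0) ?F"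
    unfolding Running next_val_def by (rule expectation_step_Running[OF b1, symmetric])
  finally show ?thesis .
qed (simp add: expectation_step_Done)

lemma expectation_compensated_llr_nonneg:
  assumes \<beta>: "\<beta> \<in> \<A>" and i: "i \<in> {1..d-2}"
  shows "0 \<le> measure_pmf.expectation (run P d \<gamma> \<Delta> \<beta> n) (compensated_llr \<beta> (flip i \<beta>))"
proof (induction n)
  case 0
  then show ?case by (simp add: compensated_llr_def)
next
  case (Suc n)
  have \<beta>': "flip i \<beta> \<in> \<A>" using flip_in_action_set[OF \<beta> i] .
  let ?F = "compensated_llr \<beta> (flip i \<beta>)"
  have "\<bar>measure_pmf.expectation (step P d \<gamma> \<Delta> \<beta> c0) ?F\<bar> \<le> (1 + kl_rate) * Suc n"
    if "c0 \<in> set_pmf (run P d \<gamma> \<Delta> \<beta> n)" for c0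
    using that by (intro abs_expectation_pmf_le abs_compensated_llr_le[OF \<beta> \<beta>' length_hist_run_le])
      (auto simp: set_pmf_run_Suc)
  then have "integrable (run P d \<gamma> \<Delta> \<beta> n) (\<lambda>c0. measure_pmf.expectation (step P d \<gamma> \<Delta> \<beta> c0) ?F)"
    by (rule integrable_pmf_bounded)
  moreover have "integrable (run P d \<gamma> \<Delta> \<beta> n) ?F"
    by (rule integrable_pmf_bounded[OF abs_compensated_llr_le[OF \<beta> \<beta>' length_hist_run_le]])
  ultimately have "measure_pmf.expectation (run P d \<gamma> \<Delta> \<beta> n) ?F \<le>
      measure_pmf.expectation (run P d \<gamma> \<Delta> \<beta> n) (\<lambda>c0. measure_pmf.expectation (step P d \<gamma> \<Delta> \<beta> c0) ?F)"
    using compensated_llr_le_expectation_step[OF \<beta> i length_hist_run_le]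
    by (intro integral_mono_AE) (auto simp: AE_measure_pmf_iff)
  also have "\<dots> = measure_pmf.expectation (run P d \<gamma> \<Delta> \<beta> (Suc n)) ?F"
    by (rule expectation_run_Suc[symmetric, OF abs_compensated_llr_le[OF \<beta> \<beta>']])
  finally show ?case using Suc.IH by simp
qed

section \<open>Two-point lower bound and averaging\<close>

lemma expectation_log_lik_ratio_ge:
  assumes \<beta>: "\<beta> \<in> \<A>" and i: "i \<in> {1..d-2}"
  shows "- kl_rate * measure_pmf.expectation (run P d \<gamma> \<Delta> \<beta> n) (\<lambda>c. real (length (hist c)))
    \<le> measure_pmf.expectation (run P d \<gamma> \<Delta> \<beta> n) (\<lambda>c. log_lik_ratio \<beta> (flip i \<beta>) (hist c))"
proof -
  have "integrable (run P d \<gamma> \<Delta> \<beta> n) (\<lambda>c. real (length (hist c)))"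
    by (rule integrable_pmf_bounded[where B=n]) (auto dest: length_hist_run_le)
  moreover have "integrable (run P d \<gamma> \<Delta> \<beta> n) (\<lambda>c. log_lik_ratio \<beta> (flip i \<beta>) (hist c))"
    by (rule integrable_pmf_bounded, rule abs_log_lik_ratio_run_le[OF \<beta> flip_in_action_set[OF \<beta> i]])
  ultimately show ?thesis
    using expectation_compensated_llr_nonneg[OF \<beta> i, of n] unfolding compensated_llr_def by simp
qed

text \<open>Every halted run is bad for \<open>\<beta>\<close> or for \<open>flip i \<beta>\<close>, and the likelihood ratio turns
  the \<open>\<beta>\<close>-expectation of the second event into a \<open>flip i \<beta>\<close>-probability.\<close>
lemma overlap_le_prob_err_add_prob_err_flip:
  assumes \<beta>: "\<beta> \<in> \<A>" and i: "i \<in> {1..d-2}"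
  shows "measure_pmf.expectation (run P d \<gamma> \<Delta> \<beta> n) (\<lambda>c. min 1 (exp (log_lik_ratio \<beta> (flip i \<beta>) (hist c))))
    \<le> measure_pmf.prob (run P d \<gamma> \<Delta> \<beta> n) {c. \<exists>h \<pi>. c = Done h \<pi> \<and> 1/2 \<le> err d i \<pi> \<beta>}
    + measure_pmf.prob (run P d \<gamma> \<Delta> (flip i \<beta>) n) {c. \<exists>h \<pi>. c = Done h \<pi> \<and> 1/2 \<le> err d i \<pi> (flip i \<beta>)}
    + measure_pmf.prob (run P d \<gamma> \<Delta> \<beta> n) {c. \<exists>h. c = Running h}"
proof -
  define \<beta>' where "\<beta>' = flip i \<beta>"
  have \<beta>': "\<beta>' \<in> \<A>" unfolding \<beta>'_def using flip_in_action_set[OF \<beta> i] .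
  define \<mu> where "\<mu> = run P d \<gamma> \<Delta> \<beta> n"
  define A where "A = {c. \<exists>h \<pi>. c = Done h \<pi> \<and> 1/2 \<le> err d i \<pi> \<beta>}"
  define B where "B = {c. \<exists>h \<pi>. c = Done h \<pi> \<and> 1/2 \<le> err d i \<pi> \<beta>'}"
  define R where "R = {c::config. \<exists>h. c = Running h}"
  define X where "X c = exp (log_lik_ratio \<beta> \<beta>' (hist c))" for c
  have Xb: "\<bar>X c\<bar> \<le> exp n" if "c \<in> set_pmf \<mu>" for c
    using abs_log_lik_ratio_run_le[OF \<beta> \<beta>' that[unfolded \<mu>_def]] unfolding X_def by simp
  have int_XB: "integrable \<mu> (\<lambda>c. X c * indicator B c)"
    using Xb by (intro integrable_pmf_bounded[where B="exp n"]) (auto split: split_indicator)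
  moreover have int_A: "integrable \<mu> (indicator A :: config \<Rightarrow> real)"
    and int_R: "integrable \<mu> (indicator R :: config \<Rightarrow> real)"
    by (auto intro!: integrable_pmf_bounded[where B=1])
  moreover have "integrable \<mu> (\<lambda>c. min 1 (X c))"
    by (rule integrable_pmf_bounded[where B=1]) (simp add: X_def)
  moreover have "min 1 (X c) \<le> indicator A c + X c * indicator B c + indicator R c" if "c \<in> set_pmf \<mu>" for c
  proof (cases c)
    case (Done h \<pi>)
    have "set_pmf (\<pi> S0) \<subseteq> \<A>" using output_policy_in_action_set that Done unfolding \<mu>_def by blast
    then have "err d i \<pi> \<beta> + err d i \<pi> \<beta>' = 1" unfolding \<beta>'_def by (rule err_add_err_flip[OF \<beta> i])
    then have "c \<in> A \<or> c \<in> B" unfolding A_def B_def Done by auto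
    then show ?thesis by (auto simp: X_def split: split_indicator)
  qed (auto simp: R_def X_def split: split_indicator)
  ultimately have "measure_pmf.expectation \<mu> (\<lambda>c. min 1 (X c))
      \<le> measure_pmf.expectation \<mu> (\<lambda>c. indicator A c + X c * indicator B c + indicator R c)"
    by (intro integral_mono_AE) (auto simp: AE_measure_pmf_iff)
  also have "\<dots> = measure_pmf.prob \<mu> A + measure_pmf.expectation \<mu> (\<lambda>c. X c * indicator B c)
      + measure_pmf.prob \<mu> R"
    using int_XB int_A int_R by simp
  also have "measure_pmf.expectation \<mu> (\<lambda>c. X c * indicator B c) = measure_pmf.prob (run P d \<gamma> \<Delta> \<beta>' n) B"
    using expectation_run_change_of_measure[OF \<beta> \<beta>', of "indicator B" 1 n]
    unfolding \<mu>_def X_def by (simp split: split_indicator)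
  finally show ?thesis unfolding \<mu>_def A_def B_def R_def X_def \<beta>'_def .
qed

lemma prob_err_add_prob_err_flip_ge:
  assumes \<beta>: "\<beta> \<in> \<A>" and i: "i \<in> {1..d-2}"
    and T: "measure_pmf.expectation (run P d \<gamma> \<Delta> \<beta> n) (\<lambda>c. real (length (hist c))) \<le> T"
  shows "1 - sqrt (1 - exp (- kl_rate * T)) \<le>
      measure_pmf.prob (run P d \<gamma> \<Delta> \<beta> n) {c. \<exists>h \<pi>. c = Done h \<pi> \<and> 1/2 \<le> err d i \<pi> \<beta>}
    + measure_pmf.prob (run P d \<gamma> \<Delta> (flip i \<beta>) n) {c. \<exists>h \<pi>. c = Done h \<pi> \<and> 1/2 \<le> err d i \<pi> (flip i \<beta>)}
    + measure_pmf.prob (run P d \<gamma> \<Delta> \<beta> n) {c. \<exists>h. c = Running h}"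
proof -
  have \<beta>': "flip i \<beta> \<in> \<A>" using flip_in_action_set[OF \<beta> i] .
  let ?L = "\<lambda>c. log_lik_ratio \<beta> (flip i \<beta>) (hist c)"
  have "- kl_rate * T \<le> measure_pmf.expectation (run P d \<gamma> \<Delta> \<beta> n) ?L"
    using expectation_log_lik_ratio_ge[OF \<beta> i, of n] mult_left_mono[OF T kl_rate_nonneg] by simp
  then have "1 - sqrt (1 - exp (- kl_rate * T))
      \<le> 1 - sqrt (1 - exp (measure_pmf.expectation (run P d \<gamma> \<Delta> \<beta> n) (\<lambda>c. ln (exp (?L c)))))"
    by (simp add: real_sqrt_le_mono)
  also have "\<dots> \<le> measure_pmf.expectation (run P d \<gamma> \<Delta> \<beta> n) (\<lambda>c. min 1 (exp (?L c)))"
  proof (rule bretagnolle_huber_pmf[where B=n])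
    show "\<bar>ln (exp (?L c))\<bar> \<le> n" if "c \<in> set_pmf (run P d \<gamma> \<Delta> \<beta> n)" for c
      using abs_log_lik_ratio_run_le[OF \<beta> \<beta>' that] by simp
    show "measure_pmf.expectation (run P d \<gamma> \<Delta> \<beta> n) (\<lambda>c. exp (?L c)) = 1"
      using expectation_run_change_of_measure[OF \<beta> \<beta>', of "\<lambda>_. 1" 1 n] by simp
  qed simp
  also note overlap_le_prob_err_add_prob_err_flip[OF \<beta> i]
  finally show ?thesis .
qed

definition err_prob :: "action \<Rightarrow> nat \<Rightarrow> real" where
  "err_prob \<beta> i = halt_prob P d \<gamma> \<Delta> \<beta> (\<lambda>h \<pi>. err d i \<pi> \<beta> \<ge> 1/2)"

definition exp_kl_bound :: "action \<Rightarrow> real" where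
  "exp_kl_bound \<beta> = (if expected_queries P d \<gamma> \<Delta> \<beta> = \<top> then 0
     else exp (- kl_rate * enn2real (expected_queries P d \<gamma> \<Delta> \<beta>)))"

lemma prob_halted_err_le_err_prob:
  "measure_pmf.prob (run P d \<gamma> \<Delta> \<beta> n) {c. \<exists>h \<pi>. c = Done h \<pi> \<and> 1/2 \<le> err d i \<pi> \<beta>} \<le> err_prob \<beta> i"
  unfolding err_prob_def halt_prob_def by (rule cSUP_upper) (auto intro!: bdd_aboveI[where M=1])

lemma err_prob_nonneg: "0 \<le> err_prob \<beta> i"
  using prob_halted_err_le_err_prob[of \<beta> 0 i] measure_nonneg order_trans by blast

lemma expectation_length_hist_le_expected_queries:
  assumes "expected_queries P d \<gamma> \<Delta> \<beta> \<noteq> \<top>"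
  shows "measure_pmf.expectation (run P d \<gamma> \<Delta> \<beta> n) (\<lambda>c. real (length (hist c)))
      \<le> enn2real (expected_queries P d \<gamma> \<Delta> \<beta>)"
proof -
  let ?E = "measure_pmf.expectation (run P d \<gamma> \<Delta> \<beta> n) (\<lambda>c. real (length (hist c)))"
  have int: "integrable (run P d \<gamma> \<Delta> \<beta> n) (\<lambda>c. real (length (hist c)))"
    by (rule integrable_pmf_bounded[where B=n]) (auto dest: length_hist_run_le)
  have "ennreal ?E = (\<integral>\<^sup>+ c. ennreal (real (length (hist c))) \<partial>measure_pmf (run P d \<gamma> \<Delta> \<beta> n))"
    by (rule nn_integral_eq_integral[symmetric, OF int]) auto
  also have "\<dots> \<le> expected_queries P d \<gamma> \<Delta> \<beta>"
    unfolding expected_queries_def by (rule SUP_upper) simp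
  finally have "enn2real (ennreal ?E) \<le> enn2real (expected_queries P d \<gamma> \<Delta> \<beta>)"
    using assms by (intro enn2real_mono) (auto simp: top.not_eq_extremum)
  moreover have "0 \<le> ?E" by (rule integral_nonneg_AE) simp
  ultimately show ?thesis by simp
qed

lemma prob_running_tendsto_0:
  assumes "halts_as P d \<gamma> \<Delta> \<beta>"
  shows "(\<lambda>n. measure_pmf.prob (run P d \<gamma> \<Delta> \<beta> n) {c. \<exists>h. c = Running h}) \<longlonglongrightarrow> 0"
proof -
  have "{c. \<exists>h. c = Running h} = UNIV - {c. \<exists>h \<pi>. c = Done h \<pi>}"
    by auto (metis config.exhaust)
  then have "measure_pmf.prob (run P d \<gamma> \<Delta> \<beta> n) {c. \<exists>h. c = Running h}
      = 1 - measure_pmf.prob (run P d \<gamma> \<Delta> \<beta> n) {c. \<exists>h \<pi>. c = Done h \<pi>}" for n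
    by (subst measure_pmf.prob_compl[symmetric]) simp_all
  moreover have "(\<lambda>n. 1 - measure_pmf.prob (run P d \<gamma> \<Delta> \<beta> n) {c. \<exists>h \<pi>. c = Done h \<pi>}) \<longlonglongrightarrow> 1 - 1"
    using assms unfolding halts_as_def by (intro tendsto_diff) auto
  ultimately show ?thesis by simp
qed

lemma err_prob_add_err_prob_flip_ge:
  assumes \<beta>: "\<beta> \<in> \<A>" and i: "i \<in> {1..d-2}" and halts: "halts_as P d \<gamma> \<Delta> \<beta>"
  shows "1 - sqrt (1 - exp_kl_bound \<beta>) \<le> err_prob \<beta> i + err_prob (flip i \<beta>) i"
proof (cases "expected_queries P d \<gamma> \<Delta> \<beta> = \<top>")
  case True
  then show ?thesis unfolding exp_kl_bound_def using err_prob_nonneg[of \<beta> i] err_prob_nonneg[of "flip i \<beta>" i] by simp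
next
  case False
  define T where "T = enn2real (expected_queries P d \<gamma> \<Delta> \<beta>)"
  define r where "r n = measure_pmf.prob (run P d \<gamma> \<Delta> \<beta> n) {c. \<exists>h. c = Running h}" for n
  have "r \<longlonglongrightarrow> 0" unfolding r_def by (rule prob_running_tendsto_0[OF halts])
  moreover have "1 - sqrt (1 - exp (- kl_rate * T)) - r n \<le> err_prob \<beta> i + err_prob (flip i \<beta>) i" for n
    using prob_err_add_prob_err_flip_ge[OF \<beta> i expectation_length_hist_le_expected_queries[OF False, of n]]
      prob_halted_err_le_err_prob[of \<beta> n i] prob_halted_err_le_err_prob[of "flip i \<beta>" n i]
    unfolding r_def T_def by simp
  ultimately have "1 - sqrt (1 - exp (- kl_rate * T)) - 0 \<le> err_prob \<beta> i + err_prob (flip i \<beta>) i"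
    by (intro LIMSEQ_le_const2[where X="\<lambda>n. 1 - sqrt (1 - exp (- kl_rate * T)) - r n"] tendsto_diff) auto
  then show ?thesis unfolding exp_kl_bound_def T_def using False by simp
qed

lemma ex_action_sum_err_prob_ge:
  assumes halts: "\<forall>\<beta>\<in>\<A>. halts_as P d \<gamma> \<Delta> \<beta>"
  shows "\<exists>\<beta>\<in>\<A>. real (d-2) / 2 - real (d-2) / 2 * sqrt (1 - exp_kl_bound \<beta>) \<le> (\<Sum>i=1..d-2. err_prob \<beta> i)"
proof -
  define g where "g \<beta> = (1 - sqrt (1 - exp_kl_bound \<beta>)) / 2" for \<beta>
  have per_coordinate: "(\<Sum>\<beta>\<in>\<A>. g \<beta>) \<le> (\<Sum>\<beta>\<in>\<A>. err_prob \<beta> i)" if i: "i \<in> {1..d-2}" for i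
  proof -
    have "(\<Sum>\<beta>\<in>\<A>. err_prob (flip i \<beta>) i) = (\<Sum>\<beta>\<in>flip i ` \<A>. err_prob \<beta> i)"
      by (rule sum.reindex[symmetric, OF inj_on_subset[OF inj_flip subset_UNIV], unfolded comp_def])
    also have "\<dots> = (\<Sum>\<beta>\<in>\<A>. err_prob \<beta> i)" unfolding flip_image_action_set[OF i] ..
    finally have "(\<Sum>\<beta>\<in>\<A>. err_prob (flip i \<beta>) i) = (\<Sum>\<beta>\<in>\<A>. err_prob \<beta> i)" .
    moreover have "(\<Sum>\<beta>\<in>\<A>. 2 * g \<beta>) \<le> (\<Sum>\<beta>\<in>\<A>. err_prob \<beta> i + err_prob (flip i \<beta>) i)"
      using err_prob_add_err_prob_flip_ge[OF _ i] halts unfolding g_def by (intro sum_mono) force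
    ultimately show ?thesis by (simp add: sum.distrib sum_distrib_left[symmetric])
  qed
  have "(\<Sum>\<beta>\<in>\<A>. real (d-2) * g \<beta>) = (\<Sum>i=1..d-2. \<Sum>\<beta>\<in>\<A>. g \<beta>)"
    by (simp add: sum_distrib_left[symmetric])
  also have "\<dots> \<le> (\<Sum>i=1..d-2. \<Sum>\<beta>\<in>\<A>. err_prob \<beta> i)" by (intro sum_mono per_coordinate)
  also have "\<dots> = (\<Sum>\<beta>\<in>\<A>. \<Sum>i=1..d-2. err_prob \<beta> i)" by (rule sum.swap)
  finally obtain \<beta> where "\<beta> \<in> \<A>" "real (d-2) * g \<beta> \<le> (\<Sum>i=1..d-2. err_prob \<beta> i)"
    using ex_le_of_sum_le[OF finite_action_set action_set_nonempty] by blast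
  then show ?thesis unfolding g_def by (auto simp: algebra_simps)
qed

end

lemma Delta_bounds_of_alpha_le:
  fixes \<gamma> H \<alpha> \<Delta> :: real
  assumes "0 < \<gamma>" "\<gamma> < 1" "H = 1 / (1 - \<gamma>)" "0 < \<alpha>" "\<alpha> \<le> 0.05 * \<gamma> * H / (1 + \<gamma>)^2"
    and Delta: "\<Delta> = 4 * (1 + \<gamma>)^2 * \<alpha> / (\<gamma> * H^2)"
  shows "0 \<le> \<Delta>" "\<Delta> \<le> (1 - \<gamma>) / 5"
proof -
  have "H > 0" using assms(2,3) by simp
  then show "0 \<le> \<Delta>" unfolding Delta using assms(1,4) by simp
  have "\<Delta> \<le> 4 * (1 + \<gamma>)^2 * (0.05 * \<gamma> * H / (1 + \<gamma>)^2) / (\<gamma> * H^2)"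
    unfolding Delta using assms(1,5) \<open>H > 0\<close> by (intro divide_right_mono mult_left_mono) auto
  also have "\<dots> = 1 / (5 * H)"
    using assms(1) \<open>H > 0\<close> by (simp add: field_simps power2_eq_square add_nonneg_eq_0_iff)
  also have "\<dots> = (1 - \<gamma>) / 5" using assms(3) by simp
  finally show "\<Delta> \<le> (1 - \<gamma>) / 5" .
qed

theorem lemmaH3:
  fixes d :: nat and \<gamma> H \<alpha> \<Delta> :: real and P :: planner
  assumes "d \<ge> 3"
    and "7/12 \<le> \<gamma>" and "\<gamma> < 1"
    and "H = 1 / (1 - \<gamma>)"
    and "0 < \<alpha>" and "\<alpha> \<le> 0.05 * \<gamma> * H / (1 + \<gamma>)^2"
    and "\<Delta> = 4 * (1 + \<gamma>)^2 * \<alpha> / (\<gamma> * H^2)"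
    and "wf_planner d P"
    and "\<forall>\<beta>\<in>action_set d. halts_as P d \<gamma> \<Delta> \<beta>"
  shows "\<exists>\<beta>\<in>action_set d.
     (\<Sum>i=1..d-2. halt_prob P d \<gamma> \<Delta> \<beta> (\<lambda>h \<pi>. err d i \<pi> \<beta> \<ge> 1/2))
       \<ge> real (d-2) / 2 - real (d-2) / 2 *
          sqrt (1 - (if expected_queries P d \<gamma> \<Delta> \<beta> = \<top> then 0
                     else exp (- (5 * \<Delta>^2 * H * enn2real (expected_queries P d \<gamma> \<Delta> \<beta>))
                               / (real (d-2))^2)))"
proof -
  have "0 \<le> \<Delta>" "\<Delta> \<le> (1 - \<gamma>) / 5"
    using Delta_bounds_of_alpha_le[OF _ assms(3-7)] assms(2) by simp_all
  then interpret mdp_family_planner d \<gamma> \<Delta> H P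
    using assms(1-4,8) by unfold_locales
  have "- kl_rate * e = - (5 * \<Delta>^2 * H * e) / (real (d-2))^2" for e
    unfolding kl_rate_def by simp
  from ex_action_sum_err_prob_ge[OF assms(9), unfolded err_prob_def exp_kl_bound_def this]
  show ?thesis by simp
qed

end
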